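(* Let $\alpha>0>\beta$ with $|\beta|<\alpha$, and put $\delta=\left(\frac{\alpha-\beta}{\alpha+\beta}\right)^2$ (so $\delta>1$) and $K=\frac{2\alpha}{(\alpha+\beta)^2}>0$. Let $\omega>0$, $\gamma>0$, $k_1>0$ with $k_1\neq 1$, and put $M=\delta^{\frac{1}{1-\delta}}-\delta^{\frac{\delta}{1-\delta}}$. For $T\ge 0$ define, for $s\in\mathbb{R}$ and $y>0$, $$\mathcal{G}_T(s,y)=\left(s-\frac{\ln y}{K}-T,\; y^{\delta}+\gamma\bigl(1+k_1\sin(2\omega s)\bigr)\right),$$ and consider the fixed points $(s,y)$ of $\mathcal{G}_T$ (i.e. $\mathcal{G}_T(s,y)=(s,y)$), where $s$ is taken modulo $\pi/\omega$. Then the curves $k_1=1$, $\gamma(1-k_1)=M$ and $\gamma(1+k_1)=M$ separate the first quadrant of the $(k_1,\gamma)$-plane into five regions with the following behaviour: (1) if $k_1\in(0,1)$ and $M<\gamma(1-k_1)$, then $\mathcal{G}_T$ has no fixed points for any $T$; (2) if $k_1\in(0,1)$ and $\gamma(1-k_1)<M<\gamma(1+k_1)$, then there are fixed points for each $T\in[T_1,T_2]$; (3) if $k_1\in(0,1)$ and $\gamma(1+k_1)<M$, then there are fixed points for each $T\in[T_1,T_2]\cup[T_3,T_4]$; (4) if $k_1>1$ and $M<\gamma(1+k_1)$, then there are fixed points for each $T\in(0,\infty)$; (5) if $k_1>1$ and $\gamma(1+k_1)<M$, then there are fixed points for each $T\in(0,T_1]\cup[T_2,\infty)$; where $0<T_1<T_2<T_3<T_4$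 are real numbers (depending on the parameters). Moreover, when fixed points exist for $T$ in an interval, there are exactly two fixed points (with $s$ modulo $\pi/\omega$) for each $T$ in the interior of the interval and only one for $T$ in the boundary of the interval. These qualitative features occur for every $\omega>0$: the sets of values of $T$ above and the $y$-coordinates of the fixed points do not depend on $\omega$, and only the coordinate $s$ of the fixed points depends on $\omega$.
   Context: The map $\mathcal{G}_T$ is obtained from an approximate first return map $G(s,y)$ of a periodically forced system by subtracting the auxiliary return time $T$ from the first coordinate; $\mathcal{G}_T$ commutes with the translation $s\mapsto s+\pi/\omega$, which is why fixed points are counted with $s$ modulo $\pi/\omega$. *)

theory Defs
  imports Complex_Main
begin

definition delta :: "real \<Rightarrow> real \<Rightarrow> real" where
  "delta \<alpha> \<beta> = ((\<alpha> - \<beta>) / (\<alpha> + \<beta>))^2"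

definition Kc :: "real \<Rightarrow> real \<Rightarrow> real" where
  "Kc \<alpha> \<beta> = 2 * \<alpha> / (\<alpha> + \<beta>)^2"

definition Mc :: "real \<Rightarrow> real \<Rightarrow> real" where
  "Mc \<alpha> \<beta> = delta \<alpha> \<beta> powr (1 / (1 - delta \<alpha> \<beta>))
              - delta \<alpha> \<beta> powr (delta \<alpha> \<beta> / (1 - delta \<alpha> \<beta>))"

definition GT :: "real \<Rightarrow> real \<Rightarrow> real \<Rightarrow> real \<Rightarrow> real \<Rightarrow> real \<Rightarrow> real \<times> real \<Rightarrow> real \<times> real" where
  "GT \<alpha> \<beta> \<gamma> k1 \<omega> T p = (case p of (s, y) \<Rightarrow>
     (s - ln y / Kc \<alpha> \<beta> - T, y powr delta \<alpha> \<beta> + \<gamma> * (1 + k1 * sin (2 * \<omega> * s))))"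

definition fixpts :: "real \<Rightarrow> real \<Rightarrow> real \<Rightarrow> real \<Rightarrow> real \<Rightarrow> real \<Rightarrow> (real \<times> real) set" where
  "fixpts \<alpha> \<beta> \<gamma> k1 \<omega> T = {(s, y). 0 < y \<and> GT \<alpha> \<beta> \<gamma> k1 \<omega> T (s, y) = (s, y)}"

text \<open>Number of fixed points counted with s modulo pi/omega
  (one representative s in [0, pi/omega) per class).\<close>
definition nfix :: "real \<Rightarrow> real \<Rightarrow> real \<Rightarrow> real \<Rightarrow> real \<Rightarrow> real \<Rightarrow> nat" where
  "nfix \<alpha> \<beta> \<gamma> k1 \<omega> T = card {p \<in> fixpts \<alpha> \<beta> \<gamma> k1 \<omega> T. 0 \<le> fst p \<and> fst p < pi / \<omega>}"

end

theory Submission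
  imports Defs "HOL-Analysis.Complex_Transcendental"
begin

(* The first coordinate of a fixed point gives ln y = -K T, so y = e^(-K T) is determined by T
   alone, and the second coordinate then becomes
     gamma (1 + k1 sin (2 omega s)) = g(T),   g(T) = e^(-K T) - e^(-delta K T) = y - y^delta.
   Since delta > 1, g vanishes at 0, increases strictly up to its maximum M at
   T* = ln delta / ((delta - 1) K) and then decreases strictly to 0; each superlevel set
   {T >= 0. g T >= L} with 0 < L < M is therefore a compact interval [a, b] with 0 < a < b.
   A fixed point exists iff g(T) lies in the band [gamma (1 - k1), gamma (1 + k1)], and then
   sin (2 omega s) takes a prescribed value of modulus at most 1, attained at two points of a
   period [0, pi/omega), or at one point if the modulus is 1, i.e. if g(T) is on the boundary
   of the band. The five regimes are the possible positions of this band relative to [0, M]. *)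

lemma eq_if_diff_multiple_2pi:
  fixes x y n :: real
  assumes "0 \<le> x" "x < 2 * pi" "0 \<le> y" "y < 2 * pi" "n \<in> \<int>" "x = y + 2 * n * pi"
  shows "x = y"
proof -
  obtain m :: int where m: "n = of_int m" using \<open>n \<in> \<int>\<close> by (auto elim: Ints_cases)
  have "\<bar>n\<bar> * (2 * pi) = \<bar>x - y\<bar>" using assms(6) by (simp add: abs_mult)
  also have "\<dots> < 1 * (2 * pi)" using assms(1-4) by simp
  finally have "\<bar>of_int m :: real\<bar> < 1" unfolding m by (simp only: mult_less_cancel_right) simp
  then have "m = 0" by linarith
  then show ?thesis using assms(6) m by simp
qed

lemma sin_solutions_Ico_2pi:
  fixes c :: real
  assumes "\<bar>c\<bar> \<le> 1"
  defines "a \<equiv> arcsin c"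
  shows "{x. 0 \<le> x \<and> x < 2 * pi \<and> sin x = c} = {if 0 \<le> a then a else a + 2 * pi, pi - a}"
    (is "_ = {?r1, ?r2}")
proof -
  have a: "-(pi/2) \<le> a" "a \<le> pi/2" "sin a = c"
    using arcsin_bounded[of c] assms by (auto simp: a_def)
  have r1: "0 \<le> ?r1" "?r1 < 2 * pi" "sin ?r1 = c" and r2: "0 \<le> ?r2" "?r2 < 2 * pi" "sin ?r2 = c"
    using a pi_gt_zero by (auto simp del: pi_gt_zero)
  have "x = ?r1 \<or> x = ?r2" if x: "0 \<le> x" "x < 2 * pi" "sin x = c" for x
  proof -
    obtain n where n: "n \<in> \<int>" "x = a + 2 * n * pi \<or> x = - a + (2 * n + 1) * pi"
      using x(3) a(3) sin_eq[of x a] by auto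
    then consider "x = ?r1 + 2 * n * pi" | "x = ?r1 + 2 * (n - 1) * pi" | "x = ?r2 + 2 * n * pi"
      by (cases "0 \<le> a") (auto simp: algebra_simps)
    then show ?thesis
    proof cases
      case 1
      then show ?thesis using eq_if_diff_multiple_2pi[OF x(1,2) r1(1,2) n(1)] by blast
    next
      case 2
      moreover have "n - 1 \<in> \<int>"
        using n(1) by simp
      ultimately show ?thesis using eq_if_diff_multiple_2pi[OF x(1,2) r1(1,2)] by blast
    next
      case 3
      then show ?thesis using eq_if_diff_multiple_2pi[OF x(1,2) r2(1,2) n(1)] by blast
    qed
  qed
  with r1 r2 show ?thesis
    by blast
qed

lemma card_sin_solutions_Ico_2pi:
  fixes c :: real
  assumes "\<bar>c\<bar> \<le> 1"
  shows "card {x. 0 \<le> x \<and> x < 2 * pi \<and> sin x = c} = (if \<bar>c\<bar> = 1 then 1 else 2)"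
proof -
  define a where "a = arcsin c"
  have a: "-(pi/2) \<le> a" "a \<le> pi/2" "sin a = c"
    using arcsin_bounded[of c] assms by (auto simp: a_def)
  have "(if 0 \<le> a then a else a + 2 * pi) = pi - a \<longleftrightarrow> a = pi/2 \<or> a = -(pi/2)"
    (is "?r1 = ?r2 \<longleftrightarrow> _")
    using a by (auto; insert pi_gt_zero, linarith)
  also have "\<dots> \<longleftrightarrow> \<bar>c\<bar> = 1"
  proof
    assume "a = pi/2 \<or> a = -(pi/2)"
    then have "sin a = 1 \<or> sin a = -1"
      by (elim disjE) (simp_all only: sin_pi_half sin_minus simp_thms)
    then show "\<bar>c\<bar> = 1"
      using a(3) by auto
  next
    assume "\<bar>c\<bar> = 1"
    then have "c = 1 \<or> c = -1" by auto
    then show "a = pi/2 \<or> a = -(pi/2)" by (auto simp: a_def)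
  qed
  finally show ?thesis
    unfolding sin_solutions_Ico_2pi[OF assms] a_def[symmetric] by (cases "?r1 = ?r2") simp_all
qed

lemma card_sin_solutions_one_period:
  fixes c \<omega> :: real
  assumes "\<bar>c\<bar> \<le> 1" and "\<omega> > 0"
  shows "card {s. 0 \<le> s \<and> s < pi / \<omega> \<and> sin (2 * \<omega> * s) = c} = (if \<bar>c\<bar> = 1 then 1 else 2)"
proof -
  have "{s. 0 \<le> s \<and> s < pi / \<omega> \<and> sin (2 * \<omega> * s) = c}
      = (\<lambda>x. x / (2 * \<omega>)) ` {x. 0 \<le> x \<and> x < 2 * pi \<and> sin x = c}"
  proof (intro set_eqI iffI)
    fix s assume "s \<in> {s. 0 \<le> s \<and> s < pi / \<omega> \<and> sin (2 * \<omega> * s) = c}"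
    then show "s \<in> (\<lambda>x. x / (2 * \<omega>)) ` {x. 0 \<le> x \<and> x < 2 * pi \<and> sin x = c}"
      using \<open>\<omega> > 0\<close> by (intro image_eqI[of _ _ "2 * \<omega> * s"]) (auto simp: field_simps)
  qed (use \<open>\<omega> > 0\<close> in \<open>auto simp: field_simps\<close>)
  moreover have "inj_on (\<lambda>x. x / (2 * \<omega>)) A" for A
    using \<open>\<omega> > 0\<close> by (auto intro: inj_onI)
  ultimately show ?thesis
    using card_sin_solutions_Ico_2pi[OF assms(1)] by (simp add: card_image)
qed

lemma exp_neg_mult_tendsto_0:
  fixes c :: real
  assumes "c > 0"
  shows "((\<lambda>T. exp (- (c * T))) \<longlongrightarrow> 0) at_top"
proof -
  have "filterlim (\<lambda>T. c * T) at_top at_top"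
    using filterlim_tendsto_pos_mult_at_top[OF tendsto_const assms filterlim_ident] .
  then show ?thesis
    by (intro filterlim_compose[OF exp_at_bot]) (simp add: filterlim_uminus_at_top [symmetric])
qed

definition gap :: "real \<Rightarrow> real \<Rightarrow> real \<Rightarrow> real" where
  "gap K d T = exp (- (K * T)) - exp (- (d * K * T))"

definition peak_time :: "real \<Rightarrow> real \<Rightarrow> real" where
  "peak_time K d = ln d / ((d - 1) * K)"

lemma gap_0 [simp]: "gap K d 0 = 0"
  by (simp add: gap_def)

lemma continuous_on_gap: "continuous_on A (gap K d)"
  unfolding gap_def by (intro continuous_intros)

lemma has_real_derivative_gap:
  "(gap K d has_real_derivative d * K * exp (- (d * K * T)) - K * exp (- (K * T))) (at T)"
  unfolding gap_def by (auto intro!: derivative_eq_intros simp: algebra_simps)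

context
  fixes K d :: real
  assumes K_pos: "K > 0" and d_gt_1: "d > 1"
begin

lemma peak_time_pos: "peak_time K d > 0"
  using K_pos d_gt_1 by (simp add: peak_time_def)

lemma gap_pos: "T > 0 \<Longrightarrow> gap K d T > 0"
  using K_pos d_gt_1 by (simp add: gap_def)

lemma gap_derivative_eq:
  "d * K * exp (- (d * K * T)) - K * exp (- (K * T))
     = K * exp (- (K * T)) * (exp ((d - 1) * K * (peak_time K d - T)) - 1)"
proof -
  have "(d - 1) * K * peak_time K d = ln d"
    using K_pos d_gt_1 by (simp add: peak_time_def)
  then have "- (K * T) + (d - 1) * K * (peak_time K d - T) = ln d + - (d * K * T)"
    by (simp add: algebra_simps)
  then have "exp (- (K * T)) * exp ((d - 1) * K * (peak_time K d - T))
      = exp (ln d) * exp (- (d * K * T))"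
    by (simp only: flip: exp_add)
  also have "\<dots> = d * exp (- (d * K * T))"
    using d_gt_1 by simp
  finally show ?thesis
    by (simp add: right_diff_distrib mult.assoc)
qed

lemma strict_mono_on_gap: "strict_mono_on {..peak_time K d} (gap K d)"
proof (rule strict_mono_onI)
  fix x y assume "x \<in> {..peak_time K d}" "y \<in> {..peak_time K d}" "x < y"
  then show "gap K d x < gap K d y"
  proof (intro DERIV_pos_imp_increasing_open[OF \<open>x < y\<close>] exI conjI)
    fix z assume "x < z" "z < y"
    then have "0 < (d - 1) * K * (peak_time K d - z)"
      using \<open>y \<in> {..peak_time K d}\<close> K_pos d_gt_1 by simp
    then show "0 < d * K * exp (- (d * K * z)) - K * exp (- (K * z))"
      using K_pos by (simp add: gap_derivative_eq)
  qed (rule has_real_derivative_gap, rule continuous_on_gap)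
qed

lemma strict_antimono_on_gap: "strict_antimono_on {peak_time K d..} (gap K d)"
proof (rule monotone_onI)
  fix x y assume "x \<in> {peak_time K d..}" "y \<in> {peak_time K d..}" "x < y"
  then show "gap K d y < gap K d x"
  proof (intro DERIV_neg_imp_decreasing_open[OF \<open>x < y\<close>] exI conjI)
    fix z assume "x < z" "z < y"
    then have "(d - 1) * K * (peak_time K d - z) < 0"
      using \<open>x \<in> {peak_time K d..}\<close> K_pos d_gt_1 by (simp add: mult_pos_neg)
    then show "d * K * exp (- (d * K * z)) - K * exp (- (K * z)) < 0"
      using K_pos by (simp add: gap_derivative_eq mult_pos_neg)
  qed (rule has_real_derivative_gap, rule continuous_on_gap)
qed

lemma gap_tendsto_0: "(gap K d \<longlongrightarrow> 0) at_top"
proof -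
  have "d * K > 0"
    using K_pos d_gt_1 by simp
  from tendsto_diff[OF exp_neg_mult_tendsto_0[OF K_pos] exp_neg_mult_tendsto_0[OF this]]
  show ?thesis
    unfolding gap_def by (simp add: mult.assoc)
qed

lemma gap_peak_time: "gap K d (peak_time K d) = d powr (1 / (1 - d)) - d powr (d / (1 - d))"
proof -
  have "- (K * peak_time K d) = 1 / (1 - d) * ln d" "- (d * K * peak_time K d) = d / (1 - d) * ln d"
    using K_pos d_gt_1 by (simp_all add: peak_time_def field_simps)
  then show ?thesis
    using d_gt_1 by (simp add: gap_def powr_def)
qed

lemma gap_le_peak: "T \<ge> 0 \<Longrightarrow> gap K d T \<le> gap K d (peak_time K d)"
  using strict_mono_on_leD[OF strict_mono_on_gap, of T "peak_time K d"]
    strict_antimono_on_gap[THEN monotone_onD, of "peak_time K d" T]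
  by (cases "T \<le> peak_time K d") auto

end

lemma unimodal_superlevel_sets:
  fixes g :: "real \<Rightarrow> real"
  assumes cont: "continuous_on {0..} g" and g0: "g 0 = 0" and lim: "(g \<longlongrightarrow> 0) at_top"
    and inc: "strict_mono_on {0..p} g" and dec: "strict_antimono_on {p..} g"
    and "0 \<le> p" and L: "0 < L" "L < g p"
  obtains a b where "0 < a" "a < b"
    "\<And>T. T \<ge> 0 \<Longrightarrow> L \<le> g T \<longleftrightarrow> a \<le> T \<and> T \<le> b"
    "\<And>T. T \<ge> 0 \<Longrightarrow> L < g T \<longleftrightarrow> a < T \<and> T < b"
proof -
  obtain a where a: "0 \<le> a" "a \<le> p" "g a = L"
    using IVT'[of g 0 L p] L g0 \<open>0 \<le> p\<close> continuous_on_subset[OF cont] by fastforce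
  obtain N where N: "\<And>T. T \<ge> N \<Longrightarrow> g T < L"
    using order_tendstoD(2)[OF lim L(1)] by (auto simp: eventually_at_top_linorder)
  obtain b where b: "p \<le> b" "b \<le> max N p" "g b = L"
    using IVT2'[of g "max N p" L p] L N[of "max N p"] \<open>0 \<le> p\<close> continuous_on_subset[OF cont]
    by fastforce
  have "a \<noteq> 0" "a \<noteq> p" "b \<noteq> p"
    using a b g0 L by auto
  then have abp: "0 < a" "a < p" "p < b"
    using a b by auto
  have dec': "strict_mono_on {p..} (\<lambda>x. - g x)"
    using dec by (auto simp: monotone_on_def)
  have iff: "(L \<le> g T \<longleftrightarrow> a \<le> T \<and> T \<le> b) \<and> (L < g T \<longleftrightarrow> a < T \<and> T < b)"
    if "T \<ge> 0" for T
  proof (cases "T \<le> p")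
    case True
    then show ?thesis
      using strict_mono_on_less_eq[OF inc, of a T] strict_mono_on_less[OF inc, of a T] a abp that
      by auto
  next
    case False
    then show ?thesis
      using strict_mono_on_less_eq[OF dec', of T b] strict_mono_on_less[OF dec', of T b] b abp
      by auto
  qed
  show ?thesis
    by (rule that[of a b]) (use abp iff in auto)
qed

lemma mem_fixpts_iff:
  assumes "Kc \<alpha> \<beta> \<noteq> 0"
  shows "(s, y) \<in> fixpts \<alpha> \<beta> \<gamma> k1 \<omega> T \<longleftrightarrow>
    y = exp (- (Kc \<alpha> \<beta> * T)) \<and> \<gamma> * (1 + k1 * sin (2 * \<omega> * s)) = gap (Kc \<alpha> \<beta>) (delta \<alpha> \<beta>) T"
proof -
  have "0 < y \<and> s - ln y / Kc \<alpha> \<beta> - T = s \<longleftrightarrow> y = exp (- (Kc \<alpha> \<beta> * T))"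
  proof
    assume "0 < y \<and> s - ln y / Kc \<alpha> \<beta> - T = s"
    then have "0 < y" "ln y = - (Kc \<alpha> \<beta> * T)"
      using assms by (auto simp: field_simps)
    then show "y = exp (- (Kc \<alpha> \<beta> * T))"
      by (metis exp_ln)
  qed (use assms in simp)
  moreover have "exp (- (Kc \<alpha> \<beta> * T)) powr delta \<alpha> \<beta> = exp (- (delta \<alpha> \<beta> * Kc \<alpha> \<beta> * T))"
    by (simp add: powr_def)
  ultimately show ?thesis
    unfolding fixpts_def GT_def gap_def by auto
qed

locale return_map_params =
  fixes \<alpha> \<beta> \<gamma> k1 :: real
  assumes \<alpha>_pos: "\<alpha> > 0" and \<beta>_neg: "\<beta> < 0" and abs_\<beta>_less: "\<bar>\<beta>\<bar> < \<alpha>"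
    and \<gamma>_pos: "\<gamma> > 0" and k1_pos: "k1 > 0"
begin

abbreviation g :: "real \<Rightarrow> real" where
  "g \<equiv> gap (Kc \<alpha> \<beta>) (delta \<alpha> \<beta>)"

abbreviation sin_level :: "real \<Rightarrow> real" where
  "sin_level T \<equiv> (g T - \<gamma>) / (\<gamma> * k1)"

lemma Kc_pos: "Kc \<alpha> \<beta> > 0"
  using \<alpha>_pos abs_\<beta>_less by (simp add: Kc_def)

lemma delta_gt_1: "delta \<alpha> \<beta> > 1"
proof -
  have "(\<alpha> - \<beta>) / (\<alpha> + \<beta>) > 1"
    using \<beta>_neg abs_\<beta>_less by simp
  then show ?thesis
    unfolding delta_def by simp
qed

lemma Mc_eq_peak: "Mc \<alpha> \<beta> = g (peak_time (Kc \<alpha> \<beta>) (delta \<alpha> \<beta>))"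
  using gap_peak_time[OF Kc_pos delta_gt_1] by (simp add: Mc_def)

lemma g_le_Mc: "T \<ge> 0 \<Longrightarrow> g T \<le> Mc \<alpha> \<beta>"
  using gap_le_peak[OF Kc_pos delta_gt_1] by (simp add: Mc_eq_peak)

lemma g_pos: "T > 0 \<Longrightarrow> g T > 0"
  using gap_pos[OF Kc_pos delta_gt_1] .

lemma superlevel_sets:
  assumes "0 < L" "L < Mc \<alpha> \<beta>"
  obtains a b where "0 < a" "a < b"
    "\<And>T. T \<ge> 0 \<Longrightarrow> L \<le> g T \<longleftrightarrow> a \<le> T \<and> T \<le> b"
    "\<And>T. T \<ge> 0 \<Longrightarrow> L < g T \<longleftrightarrow> a < T \<and> T < b"
  using unimodal_superlevel_sets[OF continuous_on_gap gap_0 gap_tendsto_0[OF Kc_pos delta_gt_1]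
      monotone_on_subset[OF strict_mono_on_gap[OF Kc_pos delta_gt_1]]
      strict_antimono_on_gap[OF Kc_pos delta_gt_1]]
    peak_time_pos[OF Kc_pos delta_gt_1] assms
  by (auto simp: Mc_eq_peak)

lemma fixpts_eq_image:
  "fixpts \<alpha> \<beta> \<gamma> k1 \<omega> T =
     (\<lambda>s. (s, exp (- (Kc \<alpha> \<beta> * T)))) ` {s. sin (2 * \<omega> * s) = sin_level T}"
proof -
  have "\<gamma> * (1 + k1 * x) = g T \<longleftrightarrow> x = sin_level T" for x
    using \<gamma>_pos k1_pos by (auto simp: field_simps)
  then have "(s, y) \<in> fixpts \<alpha> \<beta> \<gamma> k1 \<omega> T \<longleftrightarrow>
      y = exp (- (Kc \<alpha> \<beta> * T)) \<and> sin (2 * \<omega> * s) = sin_level T" for s y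
    using mem_fixpts_iff[of \<alpha> \<beta>] Kc_pos by simp
  then show ?thesis
    by auto
qed

lemma abs_sin_level_le_1_iff:
  "\<bar>sin_level T\<bar> \<le> 1 \<longleftrightarrow> \<gamma> * (1 - k1) \<le> g T \<and> g T \<le> \<gamma> * (1 + k1)"
  and abs_sin_level_eq_1_iff:
  "\<bar>sin_level T\<bar> = 1 \<longleftrightarrow> g T = \<gamma> * (1 - k1) \<or> g T = \<gamma> * (1 + k1)"
proof -
  have "\<gamma> * k1 > 0"
    using \<gamma>_pos k1_pos by simp
  then have "\<bar>sin_level T\<bar> = \<bar>g T - \<gamma>\<bar> / (\<gamma> * k1)"
    by simp
  with \<open>\<gamma> * k1 > 0\<close> show
    "\<bar>sin_level T\<bar> \<le> 1 \<longleftrightarrow> \<gamma> * (1 - k1) \<le> g T \<and> g T \<le> \<gamma> * (1 + k1)"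
    "\<bar>sin_level T\<bar> = 1 \<longleftrightarrow> g T = \<gamma> * (1 - k1) \<or> g T = \<gamma> * (1 + k1)"
    by (auto simp: algebra_simps abs_if)
qed

lemma fixpts_nonempty_iff:
  assumes "\<omega> \<noteq> 0"
  shows "fixpts \<alpha> \<beta> \<gamma> k1 \<omega> T \<noteq> {} \<longleftrightarrow> \<gamma> * (1 - k1) \<le> g T \<and> g T \<le> \<gamma> * (1 + k1)"
proof -
  have "(\<exists>s. sin (2 * \<omega> * s) = c) \<longleftrightarrow> \<bar>c\<bar> \<le> 1" for c
  proof
    assume "\<bar>c\<bar> \<le> 1"
    then have "sin (2 * \<omega> * (arcsin c / (2 * \<omega>))) = c"
      using assms by simp
    then show "\<exists>s. sin (2 * \<omega> * s) = c" ..
  qed auto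
  then show ?thesis
    unfolding fixpts_eq_image abs_sin_level_le_1_iff[symmetric] by auto
qed

lemma nfix_eq_card:
  "nfix \<alpha> \<beta> \<gamma> k1 \<omega> T = card {s. 0 \<le> s \<and> s < pi / \<omega> \<and> sin (2 * \<omega> * s) = sin_level T}"
proof -
  have eq: "{p \<in> fixpts \<alpha> \<beta> \<gamma> k1 \<omega> T. 0 \<le> fst p \<and> fst p < pi / \<omega>} =
      (\<lambda>s. (s, exp (- (Kc \<alpha> \<beta> * T)))) `
        {s. 0 \<le> s \<and> s < pi / \<omega> \<and> sin (2 * \<omega> * s) = sin_level T}"
    (is "_ = ?f ` ?S")
    unfolding fixpts_eq_image by auto
  have "inj_on ?f ?S"
    by (rule inj_onI) simp
  then show ?thesis
    unfolding nfix_def eq by (rule card_image)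
qed

lemma nfix_eq_2:
  assumes "\<omega> > 0" "\<gamma> * (1 - k1) < g T" "g T < \<gamma> * (1 + k1)"
  shows "nfix \<alpha> \<beta> \<gamma> k1 \<omega> T = 2"
proof -
  have c: "\<bar>sin_level T\<bar> \<le> 1" "\<bar>sin_level T\<bar> \<noteq> 1"
    using assms(2,3) abs_sin_level_le_1_iff abs_sin_level_eq_1_iff by auto
  have "nfix \<alpha> \<beta> \<gamma> k1 \<omega> T = (if \<bar>sin_level T\<bar> = 1 then 1 else 2)"
    unfolding nfix_eq_card using c(1) \<open>\<omega> > 0\<close> by (rule card_sin_solutions_one_period)
  also have "\<dots> = 2"
    using c(2) by (simp only: if_False)
  finally show ?thesis .
qed

lemma nfix_eq_1:
  assumes "\<omega> > 0" "g T = \<gamma> * (1 - k1) \<or> g T = \<gamma> * (1 + k1)"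
  shows "nfix \<alpha> \<beta> \<gamma> k1 \<omega> T = 1"
proof -
  have c: "\<bar>sin_level T\<bar> = 1"
    using assms(2) abs_sin_level_eq_1_iff by blast
  have "nfix \<alpha> \<beta> \<gamma> k1 \<omega> T = (if \<bar>sin_level T\<bar> = 1 then 1 else 2)"
    unfolding nfix_eq_card using c \<open>\<omega> > 0\<close> by (intro card_sin_solutions_one_period) simp_all
  also have "\<dots> = 1"
    by (subst c) simp
  finally show ?thesis .
qed

lemma snd_fixpts:
  assumes "\<omega> \<noteq> 0"
  shows "snd ` fixpts \<alpha> \<beta> \<gamma> k1 \<omega> T =
    (if \<gamma> * (1 - k1) \<le> g T \<and> g T \<le> \<gamma> * (1 + k1) then {exp (- (Kc \<alpha> \<beta> * T))} else {})"
proof -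
  have "snd ` fixpts \<alpha> \<beta> \<gamma> k1 \<omega> T =
      (\<lambda>_. exp (- (Kc \<alpha> \<beta> * T))) ` fst ` fixpts \<alpha> \<beta> \<gamma> k1 \<omega> T"
    unfolding fixpts_eq_image by (simp add: image_image)
  then show ?thesis
    using fixpts_nonempty_iff[OF assms, of T] by (auto simp: image_constant_conv)
qed

lemma fixpts_empty_if_Mc_below_band:
  assumes "Mc \<alpha> \<beta> < \<gamma> * (1 - k1)"
  shows "\<forall>\<omega>>0. \<forall>T\<ge>0. fixpts \<alpha> \<beta> \<gamma> k1 \<omega> T = {}"
proof (intro allI impI)
  fix \<omega> T :: real
  assume "\<omega> > 0" "T \<ge> 0"
  then show "fixpts \<alpha> \<beta> \<gamma> k1 \<omega> T = {}"
    using fixpts_nonempty_iff[of \<omega> T] g_le_Mc[of T] assms by auto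
qed

lemma fixpts_on_one_interval:
  assumes "k1 < 1" "\<gamma> * (1 - k1) < Mc \<alpha> \<beta>" "Mc \<alpha> \<beta> < \<gamma> * (1 + k1)"
  shows "\<exists>T1 T2. 0 < T1 \<and> T1 < T2 \<and>
    (\<forall>\<omega>>0. \<forall>T\<ge>0.
       (fixpts \<alpha> \<beta> \<gamma> k1 \<omega> T \<noteq> {} \<longleftrightarrow> T \<in> {T1..T2}) \<and>
       (T \<in> {T1<..<T2} \<longrightarrow> nfix \<alpha> \<beta> \<gamma> k1 \<omega> T = 2) \<and>
       (T \<in> {T1, T2} \<longrightarrow> nfix \<alpha> \<beta> \<gamma> k1 \<omega> T = 1))"
proof -
  obtain a b where ab: "0 < a" "a < b"
    and le: "\<And>T. T \<ge> 0 \<Longrightarrow> \<gamma> * (1 - k1) \<le> g T \<longleftrightarrow> a \<le> T \<and> T \<le> b"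
    and less: "\<And>T. T \<ge> 0 \<Longrightarrow> \<gamma> * (1 - k1) < g T \<longleftrightarrow> a < T \<and> T < b"
    by (rule superlevel_sets[of "\<gamma> * (1 - k1)"]) (use assms \<gamma>_pos in auto)
  have below: "g T < \<gamma> * (1 + k1)" if "T \<ge> 0" for T
    using g_le_Mc[OF that] assms(3) by simp
  show ?thesis
  proof (intro exI conjI allI impI)
    fix \<omega> T :: real
    assume \<omega>: "\<omega> > 0" and T: "T \<ge> 0"
    show "fixpts \<alpha> \<beta> \<gamma> k1 \<omega> T \<noteq> {} \<longleftrightarrow> T \<in> {a..b}"
      using fixpts_nonempty_iff[of \<omega> T] le[OF T] below[OF T] \<omega> by auto
    show "nfix \<alpha> \<beta> \<gamma> k1 \<omega> T = 2" if "T \<in> {a<..<b}"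
      using nfix_eq_2[OF \<omega>] less[OF T] below[OF T] that by auto
    show "nfix \<alpha> \<beta> \<gamma> k1 \<omega> T = 1" if "T \<in> {a, b}"
      using nfix_eq_1[OF \<omega>] le[OF T] less[OF T] that ab by fastforce
  qed (use ab in auto)
qed

lemma fixpts_on_two_intervals:
  assumes "k1 < 1" "\<gamma> * (1 + k1) < Mc \<alpha> \<beta>"
  shows "\<exists>T1 T2 T3 T4. 0 < T1 \<and> T1 < T2 \<and> T2 < T3 \<and> T3 < T4 \<and>
    (\<forall>\<omega>>0. \<forall>T\<ge>0.
       (fixpts \<alpha> \<beta> \<gamma> k1 \<omega> T \<noteq> {} \<longleftrightarrow> T \<in> {T1..T2} \<union> {T3..T4}) \<and>
       (T \<in> {T1<..<T2} \<union> {T3<..<T4} \<longrightarrow> nfix \<alpha> \<beta> \<gamma> k1 \<omega> T = 2) \<and>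
       (T \<in> {T1, T2, T3, T4} \<longrightarrow> nfix \<alpha> \<beta> \<gamma> k1 \<omega> T = 1))"
proof -
  have band: "0 < \<gamma> * (1 - k1)" "\<gamma> * (1 - k1) < \<gamma> * (1 + k1)"
    using assms(1) \<gamma>_pos k1_pos by auto
  obtain a1 b1 where ab1: "0 < a1" "a1 < b1"
    and le1: "\<And>T. T \<ge> 0 \<Longrightarrow> \<gamma> * (1 - k1) \<le> g T \<longleftrightarrow> a1 \<le> T \<and> T \<le> b1"
    and less1: "\<And>T. T \<ge> 0 \<Longrightarrow> \<gamma> * (1 - k1) < g T \<longleftrightarrow> a1 < T \<and> T < b1"
    by (rule superlevel_sets[of "\<gamma> * (1 - k1)"]) (use assms band in auto)
  obtain a2 b2 where ab2: "0 < a2" "a2 < b2"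
    and le2: "\<And>T. T \<ge> 0 \<Longrightarrow> \<gamma> * (1 + k1) \<le> g T \<longleftrightarrow> a2 \<le> T \<and> T \<le> b2"
    and less2: "\<And>T. T \<ge> 0 \<Longrightarrow> \<gamma> * (1 + k1) < g T \<longleftrightarrow> a2 < T \<and> T < b2"
    by (rule superlevel_sets[of "\<gamma> * (1 + k1)"]) (use assms band in auto)
  have nested: "a1 < a2" "b2 < b1"
    using le2[of a2] le2[of b2] less1[of a2] less1[of b2] ab2 band by auto
  show ?thesis
  proof (intro exI conjI allI impI)
    fix \<omega> T :: real
    assume \<omega>: "\<omega> > 0" and T: "T \<ge> 0"
    show "fixpts \<alpha> \<beta> \<gamma> k1 \<omega> T \<noteq> {} \<longleftrightarrow> T \<in> {a1..a2} \<union> {b2..b1}"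
      using fixpts_nonempty_iff[of \<omega> T] le1[OF T] less2[OF T] \<omega> nested ab2 by auto
    show "nfix \<alpha> \<beta> \<gamma> k1 \<omega> T = 2" if "T \<in> {a1<..<a2} \<union> {b2<..<b1}"
      using nfix_eq_2[OF \<omega>] less1[OF T] le2[OF T] nested ab2 that by auto
    show "nfix \<alpha> \<beta> \<gamma> k1 \<omega> T = 1" if "T \<in> {a1, a2, b2, b1}"
      using nfix_eq_1[OF \<omega>] le1[OF T] less1[OF T] le2[OF T] less2[OF T] nested ab1 ab2 that
      by fastforce
  qed (use ab1 ab2 nested in auto)
qed

lemma fixpts_for_all_times:
  assumes "k1 > 1" "Mc \<alpha> \<beta> < \<gamma> * (1 + k1)"
  shows "\<forall>\<omega>>0. \<forall>T>0. fixpts \<alpha> \<beta> \<gamma> k1 \<omega> T \<noteq> {} \<and> nfix \<alpha> \<beta> \<gamma> k1 \<omega> T = 2"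
proof (intro allI impI)
  fix \<omega> T :: real
  assume "\<omega> > 0" "T > 0"
  have "\<gamma> * (1 - k1) < 0"
    using assms(1) \<gamma>_pos by (simp add: mult_pos_neg)
  moreover have "0 < g T" "g T < \<gamma> * (1 + k1)"
    using g_pos[of T] g_le_Mc[of T] assms(2) \<open>T > 0\<close> by auto
  ultimately show "fixpts \<alpha> \<beta> \<gamma> k1 \<omega> T \<noteq> {} \<and> nfix \<alpha> \<beta> \<gamma> k1 \<omega> T = 2"
    using fixpts_nonempty_iff[of \<omega> T] nfix_eq_2[of \<omega> T] \<open>\<omega> > 0\<close> by auto
qed

lemma fixpts_off_middle_interval:
  assumes "k1 > 1" "\<gamma> * (1 + k1) < Mc \<alpha> \<beta>"
  shows "\<exists>T1 T2. 0 < T1 \<and> T1 < T2 \<and>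
    (\<forall>\<omega>>0. \<forall>T>0.
       (fixpts \<alpha> \<beta> \<gamma> k1 \<omega> T \<noteq> {} \<longleftrightarrow> T \<in> {0<..T1} \<union> {T2..}) \<and>
       (T \<in> {0<..<T1} \<union> {T2<..} \<longrightarrow> nfix \<alpha> \<beta> \<gamma> k1 \<omega> T = 2) \<and>
       (T \<in> {T1, T2} \<longrightarrow> nfix \<alpha> \<beta> \<gamma> k1 \<omega> T = 1))"
proof -
  have lo: "\<gamma> * (1 - k1) < 0"
    using assms(1) \<gamma>_pos by (simp add: mult_pos_neg)
  obtain a b where ab: "0 < a" "a < b"
    and le: "\<And>T. T \<ge> 0 \<Longrightarrow> \<gamma> * (1 + k1) \<le> g T \<longleftrightarrow> a \<le> T \<and> T \<le> b"
    and less: "\<And>T. T \<ge> 0 \<Longrightarrow> \<gamma> * (1 + k1) < g T \<longleftrightarrow> a < T \<and> T < b"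
    by (rule superlevel_sets[of "\<gamma> * (1 + k1)"]) (use assms \<gamma>_pos in auto)
  show ?thesis
  proof (intro exI conjI allI impI)
    fix \<omega> T :: real
    assume \<omega>: "\<omega> > 0" and T: "T > 0"
    have above: "\<gamma> * (1 - k1) < g T"
      using lo g_pos[OF T] by simp
    show "fixpts \<alpha> \<beta> \<gamma> k1 \<omega> T \<noteq> {} \<longleftrightarrow> T \<in> {0<..a} \<union> {b..}"
      using fixpts_nonempty_iff[of \<omega> T] less[of T] above \<omega> T ab by auto
    show "nfix \<alpha> \<beta> \<gamma> k1 \<omega> T = 2" if "T \<in> {0<..<a} \<union> {b<..}"
      using nfix_eq_2[OF \<omega> above] le[of T] T that by auto
    show "nfix \<alpha> \<beta> \<gamma> k1 \<omega> T = 1" if "T \<in> {a, b}"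
      using nfix_eq_1[OF \<omega>] le[of T] less[of T] T that ab by fastforce
  qed (use ab in auto)
qed

end

theorem theorem2:
  fixes \<alpha> \<beta> \<gamma> k1 :: real
  assumes "\<alpha> > 0" "\<beta> < 0" "\<bar>\<beta>\<bar> < \<alpha>" "\<gamma> > 0" "k1 > 0" "k1 \<noteq> 1"
  shows
   "(k1 < 1 \<and> Mc \<alpha> \<beta> < \<gamma> * (1 - k1) \<longrightarrow>
       (\<forall>\<omega>>0. \<forall>T\<ge>0. fixpts \<alpha> \<beta> \<gamma> k1 \<omega> T = {}))
  \<and> (k1 < 1 \<and> \<gamma> * (1 - k1) < Mc \<alpha> \<beta> \<and> Mc \<alpha> \<beta> < \<gamma> * (1 + k1) \<longrightarrow>
       (\<exists>T1 T2. 0 < T1 \<and> T1 < T2 \<and>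
          (\<forall>\<omega>>0. \<forall>T\<ge>0.
             (fixpts \<alpha> \<beta> \<gamma> k1 \<omega> T \<noteq> {} \<longleftrightarrow> T \<in> {T1..T2}) \<and>
             (T \<in> {T1<..<T2} \<longrightarrow> nfix \<alpha> \<beta> \<gamma> k1 \<omega> T = 2) \<and>
             (T \<in> {T1, T2} \<longrightarrow> nfix \<alpha> \<beta> \<gamma> k1 \<omega> T = 1))))
  \<and> (k1 < 1 \<and> \<gamma> * (1 + k1) < Mc \<alpha> \<beta> \<longrightarrow>
       (\<exists>T1 T2 T3 T4. 0 < T1 \<and> T1 < T2 \<and> T2 < T3 \<and> T3 < T4 \<and>
          (\<forall>\<omega>>0. \<forall>T\<ge>0.
             (fixpts \<alpha> \<beta> \<gamma> k1 \<omega> T \<noteq> {} \<longleftrightarrow> T \<in> {T1..T2} \<union> {T3..T4}) \<and>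
             (T \<in> {T1<..<T2} \<union> {T3<..<T4} \<longrightarrow> nfix \<alpha> \<beta> \<gamma> k1 \<omega> T = 2) \<and>
             (T \<in> {T1, T2, T3, T4} \<longrightarrow> nfix \<alpha> \<beta> \<gamma> k1 \<omega> T = 1))))
  \<and> (k1 > 1 \<and> Mc \<alpha> \<beta> < \<gamma> * (1 + k1) \<longrightarrow>
       (\<forall>\<omega>>0. \<forall>T>0.
          fixpts \<alpha> \<beta> \<gamma> k1 \<omega> T \<noteq> {} \<and> nfix \<alpha> \<beta> \<gamma> k1 \<omega> T = 2))
  \<and> (k1 > 1 \<and> \<gamma> * (1 + k1) < Mc \<alpha> \<beta> \<longrightarrow>
       (\<exists>T1 T2. 0 < T1 \<and> T1 < T2 \<and>
          (\<forall>\<omega>>0. \<forall>T>0.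
             (fixpts \<alpha> \<beta> \<gamma> k1 \<omega> T \<noteq> {} \<longleftrightarrow> T \<in> {0<..T1} \<union> {T2..}) \<and>
             (T \<in> {0<..<T1} \<union> {T2<..} \<longrightarrow> nfix \<alpha> \<beta> \<gamma> k1 \<omega> T = 2) \<and>
             (T \<in> {T1, T2} \<longrightarrow> nfix \<alpha> \<beta> \<gamma> k1 \<omega> T = 1))))
  \<and> (\<forall>\<omega>>0. \<forall>\<omega>'>0. \<forall>T\<ge>0.
       snd ` fixpts \<alpha> \<beta> \<gamma> k1 \<omega> T = snd ` fixpts \<alpha> \<beta> \<gamma> k1 \<omega>' T)"
proof -
  interpret return_map_params \<alpha> \<beta> \<gamma> k1
    using assms(1-5) by unfold_locales
  show ?thesis
    by (intro conjI impI; (elim conjE)?;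
        (rule fixpts_empty_if_Mc_below_band fixpts_on_one_interval fixpts_on_two_intervals
          fixpts_for_all_times fixpts_off_middle_interval; assumption)?)
      (simp add: snd_fixpts)
qed

end
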